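(* Let $T:\mathbb C_n[z]\to\mathbb C_m[z]$ be linear with $m=\max\{\deg T(f):f\in\mathbb C_n[z]\}$. Let $C=\Phi^{-1}(H)$ be an open circular domain, $\Phi(z)=\frac{az+b}{cz+d}$, $ad-bc\neq0$ (with $c=0$ if $C$ is a half-plane), and let $S=\phi_m^{-1}T\phi_n:\mathbb C_n[z]\to\mathbb C_m[z]$. The following are equivalent: (i) $T(f)$ is $C$-stable or zero whenever $f$ has degree $n$ and is $C$-stable; (ii) $S(f)$ is $H$-stable or zero whenever $f$ has degree $n$ and is $H$-stable; (iii) $S(f)$ is $H$-stable or zero whenever $f$ has degree at most $n$ and is $H$-stable. Moreover the following are equivalent: (iv) $T(f)\in\pi(\partial C)\cup\{0\}$ whenever $f$ has degree $n$ and $f\in\pi(\partial C)$; (v) $S(f)\in\pi(\mathbb R)\cup\{0\}$ whenever $f$ has degree $n$ and $f\in\pi(\mathbb R)$; (vi) $S(f)\in\pi(\mathbb R)\cup\{0\}$ whenever $f$ has degree at most $n$ and $f\in\pi(\mathbb R)$.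
   Context: $H=\{\Im z>0\}$; an open circular domain is the image of $H$ under a Möbius transformation. For $\Omega\subseteq\mathbb C$, a univariate polynomial is $\Omega$-stable if it is non-zero and has no zeros in $\Omega$, and $\pi(\Omega)$ is the set of non-zero univariate polynomials all of whose zeros lie in $\Omega$. For $k\in\mathbb N$, $\phi_k:\mathbb C_k[z]\to\mathbb C_k[z]$ is the invertible linear map $\phi_k(f)(z)=(cz+d)^kf(\Phi(z))$. *)

theory Defs
  imports "HOL-Analysis.Analysis" "HOL-Computational_Algebra.Polynomial"
begin

definition upper_half_plane :: "complex set" where
  "upper_half_plane = {z. Im z > 0}"

definition circ_dom :: "complex \<Rightarrow> complex \<Rightarrow> complex \<Rightarrow> complex \<Rightarrow> complex set" where
  "circ_dom a b c d = {z. c * z + d \<noteq> 0 \<and> Im ((a * z + b) / (c * z + d)) > 0}"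

definition is_open_halfplane :: "complex set \<Rightarrow> bool" where
  "is_open_halfplane A \<longleftrightarrow> (\<exists>w r. w \<noteq> 0 \<and> A = {z. Im (w * z) > r})"

definition stable_on :: "complex set \<Rightarrow> complex poly \<Rightarrow> bool" where
  "stable_on \<Omega> f \<longleftrightarrow> f \<noteq> 0 \<and> (\<forall>z\<in>\<Omega>. poly f z \<noteq> 0)"

definition zeros_in :: "complex set \<Rightarrow> complex poly set" where
  "zeros_in \<Omega> = {f. f \<noteq> 0 \<and> (\<forall>z. poly f z = 0 \<longrightarrow> z \<in> \<Omega>)}"

text \<open>phi_k(f)(z) = (cz+d)^k f((az+b)/(cz+d)), written out for f of degree at most k.\<close>
definition phi :: "nat \<Rightarrow> complex \<Rightarrow> complex \<Rightarrow> complex \<Rightarrow> complex \<Rightarrow> complex poly \<Rightarrow> complex poly" where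
  "phi k a b c d f = (\<Sum>j\<le>k. smult (coeff f j) ([:b, a:] ^ j * [:d, c:] ^ (k - j)))"

definition phi_inv :: "nat \<Rightarrow> complex \<Rightarrow> complex \<Rightarrow> complex \<Rightarrow> complex \<Rightarrow> complex poly \<Rightarrow> complex poly" where
  "phi_inv k a b c d = inv_into {p. degree p \<le> k} (phi k a b c d)"

end

theory Submission
  imports Defs "HOL-Complex_Analysis.Great_Picard"
begin

text \<open>
  For \<open>f = phi\<^sub>n g\<close> and \<open>c z + d \<noteq> 0\<close> we have \<open>f z = (c z + d) ^ n * g (\<Phi> z)\<close>, so away from the pole
  the zeros of \<open>f\<close> are the preimages of the zeros of \<open>g\<close> other than \<open>\<Phi> \<infinity> = a / c\<close>, and
  \<open>deg f = n\<close> iff \<open>g (a / c) \<noteq> 0\<close> (iff \<open>deg g = n\<close> when \<open>c = 0\<close>). Hence (i) and (iv) say that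
  \<open>S\<close> preserves stability in \<open>H\<close>, resp. real-rootedness, for those \<open>g\<close> of degree at most \<open>n\<close> with
  \<open>g (a / c) \<noteq> 0\<close>, allowing \<open>S g\<close> a zero at \<open>a / c\<close>. Such \<open>g\<close> are dense: multiplying by
  \<open>(1 + s z) ^ (n - deg g)\<close> and composing with \<open>z \<mapsto> l z + t\<close> for small real \<open>s\<close>, \<open>t\<close> and \<open>l\<close> close to
  \<open>1\<close> preserves stability in each open half-plane and makes any non-zero linear functional
  non-zero. By Hurwitz's theorem the limits are again stable or zero, which removes every
  restriction.
\<close>

lemma poly_eq_sum_atMost:
  fixes p :: "'a::comm_semiring_1 poly"
  assumes "degree p \<le> n"
  shows "poly p x = (\<Sum>i\<le>n. coeff p i * x ^ i)"
proof -
  have "poly p x = poly (\<Sum>i\<le>n. monom (coeff p i) i) x"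
    by (simp add: poly_as_sum_of_monoms' assms)
  then show ?thesis
    by (simp add: poly_sum poly_monom)
qed

lemma pcompose_eq_sum_atMost:
  fixes p q :: "complex poly"
  assumes "degree p \<le> n"
  shows "pcompose p q = (\<Sum>i\<le>n. smult (coeff p i) (q ^ i))"
  by (simp add: pcompose_altdef poly_eq_sum_atMost[OF order_trans[OF map_poly_degree_leq assms]]
      coeff_map_poly)

lemma degree_linear_power_le: "degree ([:x, y:] ^ j) \<le> j"
proof -
  have "degree [:x, y:] \<le> 1"
    by (rule order_trans[OF degree_pCons_le]) simp
  then show ?thesis
    using degree_power_le[of "[:x, y:]" j] mult_le_mono1[of "degree [:x, y:]" 1 j] by linarith
qed

lemma coeff_mult_degree_le:
  fixes p q :: "'a::comm_semiring_1 poly"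
  assumes "degree p \<le> i" "degree q \<le> j"
  shows "coeff (p * q) (i + j) = coeff p i * coeff q j"
proof (cases "degree p = i \<and> degree q = j")
  case True
  then show ?thesis
    using coeff_mult_degree_sum[of p q] by simp
next
  case False
  then have "degree p < i \<or> degree q < j"
    using assms by auto
  moreover have "degree (p * q) \<le> degree p + degree q"
    by (rule degree_mult_le)
  ultimately show ?thesis
    using assms by (auto simp: coeff_eq_0)
qed

lemma degree_eq_iff_coeff_nonzero:
  assumes "degree f \<le> k"
  shows "degree f = k \<and> f \<noteq> 0 \<longleftrightarrow> coeff f k \<noteq> 0"
  using assms le_degree[of f k] by (auto simp: le_antisym)

lemma poly_eq_if_eq_outside_point:
  fixes p q :: "complex poly"
  assumes "\<And>z. z \<noteq> z0 \<Longrightarrow> poly p z = poly q z"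
  shows "p = q"
proof (rule ccontr)
  assume "p \<noteq> q"
  then have "finite {z. poly (p - q) z = 0}"
    by (intro poly_roots_finite) simp
  moreover have "UNIV - {z0} \<subseteq> {z. poly (p - q) z = 0}"
    using assms by auto
  ultimately have "finite (UNIV - {z0} :: complex set)"
    by (rule finite_subset[rotated])
  then show False
    using infinite_UNIV_char_0[where 'a = complex] by simp
qed

section \<open>The maps phi\<close>

lemma phi_add: "phi k a b c d (f + g) = phi k a b c d f + phi k a b c d g"
  by (simp add: phi_def smult_add_left sum.distrib)

lemma phi_smult: "phi k a b c d (smult s f) = smult s (phi k a b c d f)"
  by (rule poly_eqI) (simp add: phi_def coeff_sum sum_distrib_left mult.assoc)

lemma phi_0 [simp]: "phi k a b c d 0 = 0"
  by (simp add: phi_def)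

lemma degree_phi: "degree (phi k a b c d f) \<le> k"
  unfolding phi_def
proof (rule degree_sum_le)
  fix j assume "j \<in> {..k}"
  then have "degree ([:b, a:] ^ j) + degree ([:d, c:] ^ (k - j)) \<le> k"
    using degree_linear_power_le[of b a j] degree_linear_power_le[of d c "k - j"] by simp
  then show "degree (smult (coeff f j) ([:b, a:] ^ j * [:d, c:] ^ (k - j))) \<le> k"
    using order_trans[OF degree_smult_le order_trans[OF degree_mult_le]] by blast
qed simp

lemma poly_phi:
  assumes "degree f \<le> k" "c * z + d \<noteq> 0"
  shows "poly (phi k a b c d f) z = (c * z + d) ^ k * poly f (moebius a b c d z)"
proof -
  have "poly (phi k a b c d f) z = (\<Sum>j\<le>k. coeff f j * ((a * z + b) ^ j * (c * z + d) ^ (k - j)))"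
    by (simp add: phi_def poly_sum algebra_simps)
  also have "\<dots> = (\<Sum>j\<le>k. (c * z + d) ^ k * (coeff f j * moebius a b c d z ^ j))"
  proof (rule sum.cong)
    fix j assume "j \<in> {..k}"
    then have "(c * z + d) ^ k = (c * z + d) ^ j * (c * z + d) ^ (k - j)"
      by (simp flip: power_add)
    then show "coeff f j * ((a * z + b) ^ j * (c * z + d) ^ (k - j)) =
        (c * z + d) ^ k * (coeff f j * moebius a b c d z ^ j)"
      using assms(2) by (simp add: moebius_def power_divide field_simps)
  qed simp
  also have "\<dots> = (c * z + d) ^ k * poly f (moebius a b c d z)"
    by (simp add: sum_distrib_left poly_eq_sum_atMost[OF assms(1)])
  finally show ?thesis .
qed

lemma coeff_phi_top: "coeff (phi k a b c d f) k = (\<Sum>j\<le>k. coeff f j * a ^ j * c ^ (k - j))"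
proof -
  have "coeff ([:b, a:] ^ j * [:d, c:] ^ (k - j)) k = a ^ j * c ^ (k - j)" if "j \<le> k" for j
    using coeff_mult_degree_le[OF degree_linear_power_le degree_linear_power_le, of b a j d c "k - j"] that
    by (simp add: coeff_linear_poly_power)
  then show ?thesis
    by (simp add: phi_def coeff_sum mult.assoc)
qed

lemma coeff_phi_top_affine: "coeff (phi k a b 0 d f) k = a ^ k * coeff f k"
proof -
  have "(\<Sum>j\<le>k. coeff f j * a ^ j * 0 ^ (k - j)) = (\<Sum>j\<in>{k}. coeff f j * a ^ j)"
    by (rule sum.mono_neutral_cong_right) auto
  then show ?thesis
    by (simp add: coeff_phi_top)
qed

lemma coeff_phi_top_eq_poly:
  assumes "c \<noteq> 0" "degree f \<le> k"
  shows "coeff (phi k a b c d f) k = c ^ k * poly f (a / c)"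
proof -
  have "(\<Sum>j\<le>k. coeff f j * a ^ j * c ^ (k - j)) = (\<Sum>j\<le>k. c ^ k * (coeff f j * (a / c) ^ j))"
  proof (rule sum.cong)
    fix j assume "j \<in> {..k}"
    then have "c ^ k = c ^ j * c ^ (k - j)"
      by (simp flip: power_add)
    then show "coeff f j * a ^ j * c ^ (k - j) = c ^ k * (coeff f j * (a / c) ^ j)"
      using assms(1) by (simp add: power_divide field_simps)
  qed simp
  then show ?thesis
    by (simp add: coeff_phi_top poly_eq_sum_atMost[OF assms(2)] sum_distrib_left)
qed

lemma phi_phi_adjugate:
  assumes det: "a * d - b * c \<noteq> 0" and deg: "degree f \<le> k"
  shows "phi k a b c d (phi k d (- b) (- c) a f) = smult ((a * d - b * c) ^ k) f"
proof (rule poly_eq_if_eq_outside_point)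
  fix z assume "z \<noteq> - d / c"
  then have cz: "c * z + d \<noteq> 0"
    using det by (cases "c = 0") (auto simp: field_simps add_eq_0_iff)
  have prod: "(c * z + d) * ((- c) * moebius a b c d z + a) = a * d - b * c"
    using cz by (simp add: moebius_def field_simps)
  then have ne: "(- c) * moebius a b c d z + a \<noteq> 0"
    using det by auto
  have "poly (phi k a b c d (phi k d (- b) (- c) a f)) z
      = (c * z + d) ^ k * poly (phi k d (- b) (- c) a f) (moebius a b c d z)"
    by (rule poly_phi[OF degree_phi cz])
  also have "poly (phi k d (- b) (- c) a f) (moebius a b c d z)
      = ((- c) * moebius a b c d z + a) ^ k * poly f (moebius d (- b) (- c) a (moebius a b c d z))"
    by (rule poly_phi[OF deg ne])
  also have "moebius d (- b) (- c) a (moebius a b c d z) = z"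
    using det cz by (intro moebius_inverse) auto
  finally show "poly (phi k a b c d (phi k d (- b) (- c) a f)) z = poly (smult ((a * d - b * c) ^ k) f) z"
    by (simp only: poly_smult mult.assoc[symmetric] power_mult_distrib[symmetric] prod)
qed

lemma phi_adjugate_phi:
  assumes "a * d - b * c \<noteq> 0" "degree f \<le> k"
  shows "phi k d (- b) (- c) a (phi k a b c d f) = smult ((a * d - b * c) ^ k) f"
  using phi_phi_adjugate[where a = d and b = "- b" and c = "- c" and d = a] assms
  by (simp add: mult.commute)

lemma phi_inj_on:
  assumes det: "a * d - b * c \<noteq> 0"
  shows "inj_on (phi k a b c d) {p. degree p \<le> k}"
proof (rule inj_onI)
  fix f g assume "f \<in> {p. degree p \<le> k}" "g \<in> {p. degree p \<le> k}"
    and eq: "phi k a b c d f = phi k a b c d g"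
  then have "smult ((a * d - b * c) ^ k) f = smult ((a * d - b * c) ^ k) g"
    using phi_adjugate_phi[OF det, where f = f and k = k] phi_adjugate_phi[OF det, where f = g and k = k]
    by simp
  then show "f = g"
    using det by (simp add: poly_eq_iff)
qed

lemma phi_eq_0_iff:
  assumes "a * d - b * c \<noteq> 0" "degree f \<le> k"
  shows "phi k a b c d f = 0 \<longleftrightarrow> f = 0"
  using phi_inj_on[OF assms(1), of k] assms(2) by (force simp: inj_on_def)

lemma phi_image:
  assumes det: "a * d - b * c \<noteq> 0"
  shows "phi k a b c d ` {p. degree p \<le> k} = {p. degree p \<le> k}"
proof
  show "{p. degree p \<le> k} \<subseteq> phi k a b c d ` {p. degree p \<le> k}"
  proof
    fix f :: "complex poly" assume f: "f \<in> {p. degree p \<le> k}"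
    define g where "g = smult (inverse ((a * d - b * c) ^ k)) (phi k d (- b) (- c) a f)"
    have "degree g \<le> k"
      unfolding g_def by (rule order_trans[OF degree_smult_le degree_phi])
    moreover have "phi k a b c d g = f"
      using det f by (simp add: g_def phi_smult phi_phi_adjugate)
    ultimately show "f \<in> phi k a b c d ` {p. degree p \<le> k}"
      by blast
  qed
qed (auto intro: degree_phi)

lemma
  assumes "a * d - b * c \<noteq> 0" "degree f \<le> k"
  shows phi_phi_inv: "phi k a b c d (phi_inv k a b c d f) = f"
    and degree_phi_inv: "degree (phi_inv k a b c d f) \<le> k"
  using f_inv_into_f[of f "phi k a b c d" "{p. degree p \<le> k}"]
    inv_into_into[of f "phi k a b c d" "{p. degree p \<le> k}"] phi_image[OF assms(1)] assms(2)
  by (auto simp: phi_inv_def)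

lemma all_degree_le_phi_iff:
  assumes "a * d - b * c \<noteq> 0"
  shows "(\<forall>f. degree f \<le> k \<longrightarrow> P f) \<longleftrightarrow> (\<forall>g. degree g \<le> k \<longrightarrow> P (phi k a b c d g))"
  using phi_phi_inv[OF assms] degree_phi_inv[OF assms] degree_phi by metis

section \<open>Circular domains\<close>

definition circ_form :: "complex \<Rightarrow> complex \<Rightarrow> complex \<Rightarrow> complex \<Rightarrow> complex \<Rightarrow> real" where
  "circ_form a b c d z = Im ((a * z + b) * cnj (c * z + d))"

lemma circ_form_pole: "c * z + d = 0 \<Longrightarrow> circ_form a b c d z = 0"
  by (simp add: circ_form_def)

lemma circ_dom_eq: "circ_dom a b c d = {z. 0 < circ_form a b c d z}"
  unfolding circ_dom_def Im_complex_div_gt_0 circ_form_def[symmetric]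
  by (auto simp: circ_form_pole)

lemma Im_moebius_eq_0_iff: "Im (moebius a b c d z) = 0 \<longleftrightarrow> circ_form a b c d z = 0"
  by (simp add: moebius_def circ_form_def Im_complex_div_eq_0)

lemma continuous_circ_form: "continuous_on A (circ_form a b c d)"
  unfolding circ_form_def by (intro continuous_intros)

lemma open_circ_dom: "open (circ_dom a b c d)"
  unfolding circ_dom_eq by (intro open_Collect_less continuous_intros continuous_circ_form)

lemma circ_form_add:
  "circ_form a b c d (z + of_real e * v) = circ_form a b c d z
     + e * Im ((a * cnj (c * z + d) - cnj (a * z + b) * c) * v) + e\<^sup>2 * Im (a * cnj c) * (cmod v)\<^sup>2"
  unfolding circ_form_def cmod_power2 by (simp add: algebra_simps power2_eq_square)

lemma circ_form_gradient_nonzero: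
  assumes det: "a * d - b * c \<noteq> 0" and q: "circ_form a b c d z = 0"
  shows "a * cnj (c * z + d) - cnj (a * z + b) * c \<noteq> 0"
proof
  define u s where "u = a * z + b" and "s = c * z + d"
  assume "a * cnj (c * z + d) - cnj (a * z + b) * c = 0"
  then have K: "a * cnj s = cnj u * c"
    by (simp add: u_def s_def)
  have det_eq: "a * d - b * c = a * s - c * u"
    by (simp add: u_def s_def algebra_simps)
  then have "(a * d - b * c) * cnj s = (a * s - c * u) * cnj s"
    by simp
  also have "\<dots> = c * (cnj u * s - u * cnj s)"
    using K by (simp add: algebra_simps)
  also have "cnj u * s - u * cnj s = - 2 * \<i> * of_real (circ_form a b c d z)"
    by (simp add: circ_form_def u_def s_def complex_eq_iff algebra_simps)
  finally have "s = 0"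
    using det q by simp
  moreover from this have "c * u = 0"
    using K by auto
  ultimately show False
    using det det_eq by simp
qed

text \<open>The form increases to first order in the direction \<open>\<i> * cnj K\<close> of its gradient \<open>K\<close>,
  which does not vanish on the zero set.\<close>

lemma circ_form_zero_in_closure:
  assumes det: "a * d - b * c \<noteq> 0" and q0: "circ_form a b c d z = 0"
  shows "z \<in> closure (circ_dom a b c d)"
proof -
  define K where "K = a * cnj (c * z + d) - cnj (a * z + b) * c"
  define v where "v = \<i> * cnj K"
  have "K \<noteq> 0"
    using circ_form_gradient_nonzero[OF det q0] by (simp add: K_def)
  have Kv: "Im (K * v) = (cmod K)\<^sup>2"
    by (simp add: v_def cmod_power2 power2_eq_square[symmetric])
  have v: "cmod v = cmod K"
    by (simp add: v_def norm_mult)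
  have "circ_form a b c d (z + of_real e * v) = e * Im (K * v) + e\<^sup>2 * Im (a * cnj c) * (cmod v)\<^sup>2" for e
    unfolding K_def using circ_form_add[of a b c d z e v] q0 by simp
  then have q: "circ_form a b c d (z + of_real e * v) = e * (cmod K)\<^sup>2 * (1 + e * Im (a * cnj c))" for e
    unfolding Kv v by (simp add: algebra_simps power2_eq_square)
  have "\<forall>\<^sub>F e in at_right 0. 0 < 1 + e * Im (a * cnj c)"
    by (rule order_tendstoD(1)) (auto intro!: tendsto_eq_intros)
  moreover have "\<forall>\<^sub>F e in at_right (0::real). 0 < e"
    by (simp add: eventually_at_filter)
  ultimately have ev: "\<forall>\<^sub>F e in at_right 0. z + of_real e * v \<in> closure (circ_dom a b c d)"
  proof eventually_elim
    case (elim e)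
    then show ?case
      using closure_subset \<open>K \<noteq> 0\<close> by (fastforce simp: circ_dom_eq q)
  qed
  have "((\<lambda>e. z + of_real e * v) \<longlongrightarrow> z) (at_right 0)"
    by (auto intro!: tendsto_eq_intros)
  then show ?thesis
    by (rule Lim_in_closed_set[OF closed_closure ev trivial_limit_at_right_real])
qed

lemma frontier_circ_dom:
  assumes det: "a * d - b * c \<noteq> 0"
  shows "frontier (circ_dom a b c d) = {z. circ_form a b c d z = 0}"
proof -
  let ?C = "circ_dom a b c d"
  have fr: "frontier ?C = closure ?C - ?C"
    using frontier_def interior_open[OF open_circ_dom] by metis
  have "closure ?C \<subseteq> {z. 0 \<le> circ_form a b c d z}"
    unfolding circ_dom_eq
    by (intro closure_minimal closed_Collect_le continuous_intros continuous_circ_form) auto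
  then show ?thesis
    unfolding fr using circ_form_zero_in_closure[OF det] by (force simp: circ_dom_eq)
qed

lemma moebius_adjugate_nonpole:
  assumes "a * d - b * c \<noteq> 0" "c * w \<noteq> a"
  shows "c * moebius d (- b) (- c) a w + d \<noteq> 0"
proof -
  have "a - c * w \<noteq> 0"
    using assms(2) by simp
  then have "c * moebius d (- b) (- c) a w + d = (a * d - b * c) / (a - c * w)"
    by (simp add: moebius_def field_simps)
  then show ?thesis
    using assms by simp
qed

lemma moebius_ne_infinity_image:
  assumes "a * d - b * c \<noteq> 0" "c * z + d \<noteq> 0"
  shows "c * moebius a b c d z \<noteq> a"
proof
  assume "c * moebius a b c d z = a"
  then have "c * (a * z + b) = a * (c * z + d)"
    using assms(2) by (simp add: moebius_def field_simps)
  then show False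
    using assms(1) by (simp add: algebra_simps)
qed

definition mobius_preimage :: "complex \<Rightarrow> complex \<Rightarrow> complex \<Rightarrow> complex \<Rightarrow> complex set \<Rightarrow> complex set" where
  "mobius_preimage a b c d \<Omega> = {z. c * z + d \<noteq> 0 \<and> moebius a b c d z \<in> \<Omega>}"

text \<open>\<open>{w. c * w = a}\<close> encodes \<open>\<Phi> \<infinity>\<close>: it is \<open>{a / c}\<close> if \<open>c \<noteq> 0\<close> and empty otherwise (as then
  \<open>a \<noteq> 0\<close>).\<close>

lemma stable_on_mobius_preimage_phi_iff:
  assumes det: "a * d - b * c \<noteq> 0" and deg: "degree h \<le> k"
  shows "stable_on (mobius_preimage a b c d \<Omega>) (phi k a b c d h) \<longleftrightarrow> stable_on (\<Omega> - {w. c * w = a}) h"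
proof -
  have "(\<forall>z\<in>mobius_preimage a b c d \<Omega>. poly (phi k a b c d h) z \<noteq> 0)
    \<longleftrightarrow> (\<forall>w\<in>\<Omega> - {w. c * w = a}. poly h w \<noteq> 0)"
  proof
    assume L: "\<forall>z\<in>mobius_preimage a b c d \<Omega>. poly (phi k a b c d h) z \<noteq> 0"
    show "\<forall>w\<in>\<Omega> - {w. c * w = a}. poly h w \<noteq> 0"
    proof
      fix w assume w: "w \<in> \<Omega> - {w. c * w = a}"
      then have cw: "c * w \<noteq> a"
        by simp
      define z where "z = moebius d (- b) (- c) a w"
      have cz: "c * z + d \<noteq> 0"
        unfolding z_def by (rule moebius_adjugate_nonpole[OF det cw])
      have "moebius a b c d z = w"
        unfolding z_def using det cw by (intro moebius_inverse') (auto simp: algebra_simps)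
      then have "z \<in> mobius_preimage a b c d \<Omega>" "poly (phi k a b c d h) z = (c * z + d) ^ k * poly h w"
        using w cz poly_phi[OF deg cz] by (auto simp: mobius_preimage_def)
      then show "poly h w \<noteq> 0"
        using L by auto
    qed
  next
    assume R: "\<forall>w\<in>\<Omega> - {w. c * w = a}. poly h w \<noteq> 0"
    show "\<forall>z\<in>mobius_preimage a b c d \<Omega>. poly (phi k a b c d h) z \<noteq> 0"
    proof
      fix z assume "z \<in> mobius_preimage a b c d \<Omega>"
      then have cz: "c * z + d \<noteq> 0" and "moebius a b c d z \<in> \<Omega>"
        by (auto simp: mobius_preimage_def)
      then have "poly h (moebius a b c d z) \<noteq> 0"
        using R moebius_ne_infinity_image[OF det cz] by blast
      then show "poly (phi k a b c d h) z \<noteq> 0"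
        using cz by (simp add: poly_phi[OF deg cz])
    qed
  qed
  then show ?thesis
    unfolding stable_on_def using phi_eq_0_iff[OF det deg] by blast
qed

lemma stable_on_iff_zeros_in_Compl: "stable_on \<Omega> p \<longleftrightarrow> p \<in> zeros_in (- \<Omega>)"
  by (auto simp: stable_on_def zeros_in_def)

lemma stable_on_mult: "stable_on \<Omega> p \<Longrightarrow> stable_on \<Omega> q \<Longrightarrow> stable_on \<Omega> (p * q)"
  by (auto simp: stable_on_def)

lemma stable_on_subset: "stable_on \<Omega> p \<Longrightarrow> \<Omega>' \<subseteq> \<Omega> \<Longrightarrow> stable_on \<Omega>' p"
  by (auto simp: stable_on_def)

lemma stable_on_power: "stable_on \<Omega> p \<Longrightarrow> stable_on \<Omega> (p ^ j)"
  by (auto simp: stable_on_def)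

definition halfplanes :: "real set \<Rightarrow> complex set" where
  "halfplanes \<Sigma> = {w. \<exists>\<sigma>\<in>\<Sigma>. 0 < \<sigma> * Im w}"

lemma open_halfplanes: "open (halfplanes \<Sigma>)"
proof -
  have "halfplanes \<Sigma> = (\<Union>\<sigma>\<in>\<Sigma>. {w. 0 < \<sigma> * Im w})"
    by (auto simp: halfplanes_def)
  then show ?thesis
    by (auto intro!: open_UN open_Collect_less continuous_intros)
qed

lemma upper_half_plane_eq_halfplanes: "upper_half_plane = halfplanes {1}"
  by (auto simp: upper_half_plane_def halfplanes_def)

lemma Compl_range_of_real: "- range complex_of_real = halfplanes {1, -1}"
  unfolding Reals_def[symmetric] by (auto simp: halfplanes_def complex_is_Real_iff)

lemma circ_dom_eq_mobius_preimage: "circ_dom a b c d = mobius_preimage a b c d (halfplanes {1})"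
  by (auto simp: circ_dom_def halfplanes_def moebius_def mobius_preimage_def)

lemma Compl_frontier_circ_dom:
  assumes "a * d - b * c \<noteq> 0"
  shows "- frontier (circ_dom a b c d) = mobius_preimage a b c d (halfplanes {1, -1})"
proof -
  have "w \<in> halfplanes {1, -1} \<longleftrightarrow> Im w \<noteq> 0" for w
    by (auto simp: halfplanes_def)
  then show ?thesis
    unfolding frontier_circ_dom[OF assms] mobius_preimage_def
    by (auto simp: Im_moebius_eq_0_iff circ_form_pole)
qed

definition linear_functional_on :: "nat \<Rightarrow> (complex poly \<Rightarrow> complex) \<Rightarrow> bool" where
  "linear_functional_on n L \<longleftrightarrow>
     (\<forall>f g. degree f \<le> n \<longrightarrow> degree g \<le> n \<longrightarrow> L (f + g) = L f + L g) \<and>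
     (\<forall>f s. degree f \<le> n \<longrightarrow> L (smult s f) = s * L f)"

definition linear_map_on :: "nat \<Rightarrow> (complex poly \<Rightarrow> complex poly) \<Rightarrow> bool" where
  "linear_map_on n S \<longleftrightarrow>
     (\<forall>f g. degree f \<le> n \<longrightarrow> degree g \<le> n \<longrightarrow> S (f + g) = S f + S g) \<and>
     (\<forall>f s. degree f \<le> n \<longrightarrow> S (smult s f) = smult s (S f))"

lemma linear_map_on_id: "linear_map_on n (\<lambda>f. f)"
  by (simp add: linear_map_on_def)

lemma linear_functional_on_poly:
  "linear_map_on n S \<Longrightarrow> linear_functional_on n (\<lambda>f. poly (S f) x)"
  by (simp add: linear_map_on_def linear_functional_on_def)

lemma linear_functional_on_coeff:
  "linear_map_on n S \<Longrightarrow> linear_functional_on n (\<lambda>f. coeff (S f) i)"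
  by (simp add: linear_map_on_def linear_functional_on_def)

lemma linear_functional_on_0:
  assumes "linear_functional_on n L"
  shows "L 0 = 0"
proof -
  have "L (smult 0 0) = 0 * L 0"
    using assms degree_0 unfolding linear_functional_on_def by (metis le0)
  then show ?thesis
    by simp
qed

lemma linear_functional_on_sum:
  assumes L: "linear_functional_on n L" and "finite A" "\<And>i. i \<in> A \<Longrightarrow> degree (f i) \<le> n"
  shows "L (\<Sum>i\<in>A. f i) = (\<Sum>i\<in>A. L (f i))"
  using assms(2,3)
proof (induction A rule: finite_induct)
  case empty
  then show ?case
    by (simp add: linear_functional_on_0[OF L])
next
  case (insert x A)
  then have "degree (\<Sum>i\<in>A. f i) \<le> n"
    by (intro degree_sum_le) auto
  then show ?case
    using insert L by (simp add: linear_functional_on_def)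
qed

lemma linear_functional_on_expand:
  assumes L: "linear_functional_on n L" and f: "degree f \<le> n"
  shows "L f = (\<Sum>i\<le>n. coeff f i * L (monom 1 i))"
proof -
  have "f = (\<Sum>i\<le>n. smult (coeff f i) (monom 1 i))"
    using poly_as_sum_of_monoms'[OF f] by (simp add: smult_monom)
  also have "L \<dots> = (\<Sum>i\<le>n. L (smult (coeff f i) (monom 1 i)))"
    by (rule linear_functional_on_sum[OF L])
      (auto intro: order_trans[OF degree_smult_le] order_trans[OF degree_monom_le])
  also have "\<dots> = (\<Sum>i\<le>n. coeff f i * L (monom 1 i))"
  proof (rule sum.cong[OF refl])
    fix i assume "i \<in> {..n}"
    then have "degree (monom (1::complex) i) \<le> n"
      by (simp add: degree_monom_eq)
    then show "L (smult (coeff f i) (monom 1 i)) = coeff f i * L (monom 1 i)"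
      using L by (simp add: linear_functional_on_def)
  qed
  finally show ?thesis .
qed

section \<open>Coefficientwise convergence and Hurwitz's theorem\<close>

definition coeffwise_limit :: "(nat \<Rightarrow> complex poly) \<Rightarrow> complex poly \<Rightarrow> bool" where
  "coeffwise_limit G g \<longleftrightarrow> (\<forall>i. (\<lambda>k. coeff (G k) i) \<longlonglongrightarrow> coeff g i)"

lemma coeffwise_limit_const: "coeffwise_limit (\<lambda>k. p) p"
  by (simp add: coeffwise_limit_def)

lemma coeffwise_limit_mult:
  "coeffwise_limit P p \<Longrightarrow> coeffwise_limit Q q \<Longrightarrow> coeffwise_limit (\<lambda>k. P k * Q k) (p * q)"
  unfolding coeffwise_limit_def coeff_mult by (intro allI tendsto_sum tendsto_mult) auto

lemma coeffwise_limit_power: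
  "coeffwise_limit P p \<Longrightarrow> coeffwise_limit (\<lambda>k. P k ^ j) (p ^ j)"
  by (induction j) (simp_all add: coeffwise_limit_const coeffwise_limit_mult)

lemma coeffwise_limit_pCons:
  assumes "X \<longlonglongrightarrow> x" "coeffwise_limit P p"
  shows "coeffwise_limit (\<lambda>k. pCons (X k) (P k)) (pCons x p)"
  unfolding coeffwise_limit_def
proof
  fix i show "(\<lambda>k. coeff (pCons (X k) (P k)) i) \<longlonglongrightarrow> coeff (pCons x p) i"
    using assms by (cases i) (auto simp: coeffwise_limit_def)
qed

lemma coeffwise_limit_smult:
  "X \<longlonglongrightarrow> x \<Longrightarrow> coeffwise_limit P p \<Longrightarrow> coeffwise_limit (\<lambda>k. smult (X k) (P k)) (smult x p)"
  unfolding coeffwise_limit_def by (auto intro: tendsto_mult)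

lemma coeffwise_limit_sum:
  "(\<And>j. j \<in> A \<Longrightarrow> coeffwise_limit (\<lambda>k. F k j) (f j))
    \<Longrightarrow> coeffwise_limit (\<lambda>k. \<Sum>j\<in>A. F k j) (\<Sum>j\<in>A. f j)"
  unfolding coeffwise_limit_def coeff_sum by (auto intro: tendsto_sum)

lemma degree_le_of_coeffwise_limit:
  assumes "coeffwise_limit G g" "\<And>k. degree (G k) \<le> n"
  shows "degree g \<le> n"
proof (rule degree_le, intro allI impI)
  fix i assume "n < i"
  then have "(\<lambda>k. coeff (G k) i) = (\<lambda>k. 0)"
    using assms(2) by (auto intro: coeff_eq_0 le_less_trans)
  then show "coeff g i = 0"
    using assms(1) LIMSEQ_unique[OF _ tendsto_const] by (metis coeffwise_limit_def)
qed

lemma coeffwise_limit_pcompose: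
  assumes P: "coeffwise_limit P p" and Q: "coeffwise_limit Q q" and deg: "\<And>k. degree (P k) \<le> n"
  shows "coeffwise_limit (\<lambda>k. pcompose (P k) (Q k)) (pcompose p q)"
proof -
  have "degree p \<le> n"
    by (rule degree_le_of_coeffwise_limit[OF P deg])
  moreover have "coeffwise_limit (\<lambda>k. \<Sum>i\<le>n. smult (coeff (P k) i) (Q k ^ i)) (\<Sum>i\<le>n. smult (coeff p i) (q ^ i))"
    using P Q by (intro coeffwise_limit_sum coeffwise_limit_smult coeffwise_limit_power)
      (auto simp: coeffwise_limit_def)
  ultimately show ?thesis
    by (simp only: pcompose_eq_sum_atMost[OF deg] pcompose_eq_sum_atMost)
qed

lemma coeffwise_limit_linear:
  assumes S: "linear_map_on n S" and lim: "coeffwise_limit G g" and deg: "\<And>k. degree (G k) \<le> n"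
  shows "coeffwise_limit (\<lambda>k. S (G k)) (S g)"
  unfolding coeffwise_limit_def
proof
  fix i
  have L: "linear_functional_on n (\<lambda>f. coeff (S f) i)"
    by (rule linear_functional_on_coeff[OF S])
  have "degree g \<le> n"
    by (rule degree_le_of_coeffwise_limit[OF lim deg])
  have "(\<lambda>k. \<Sum>j\<le>n. coeff (G k) j * coeff (S (monom 1 j)) i)
      \<longlonglongrightarrow> (\<Sum>j\<le>n. coeff g j * coeff (S (monom 1 j)) i)"
    using lim unfolding coeffwise_limit_def by (intro tendsto_intros) auto
  then show "(\<lambda>k. coeff (S (G k)) i) \<longlonglongrightarrow> coeff (S g) i"
    using linear_functional_on_expand[OF L] deg \<open>degree g \<le> n\<close> by simp
qed

lemma norm_poly_diff_le:
  fixes p q :: "complex poly"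
  assumes "degree p \<le> M" "degree q \<le> M" "norm z \<le> B"
  shows "norm (poly p z - poly q z) \<le> (\<Sum>i\<le>M. norm (coeff p i - coeff q i) * B ^ i)"
proof -
  have "norm (poly p z - poly q z) = norm (\<Sum>i\<le>M. (coeff p i - coeff q i) * z ^ i)"
    by (simp add: poly_eq_sum_atMost[OF assms(1)] poly_eq_sum_atMost[OF assms(2)]
        sum_subtractf left_diff_distrib)
  also have "\<dots> \<le> (\<Sum>i\<le>M. norm (coeff p i - coeff q i) * B ^ i)"
  proof (rule order_trans[OF norm_sum sum_mono])
    fix i
    have "norm (z ^ i) \<le> B ^ i"
      using assms(3) by (simp add: norm_power power_mono)
    then show "norm ((coeff p i - coeff q i) * z ^ i) \<le> norm (coeff p i - coeff q i) * B ^ i"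
      by (simp add: norm_mult mult_left_mono)
  qed
  finally show ?thesis .
qed

lemma uniform_limit_poly:
  assumes lim: "coeffwise_limit G p" and deg: "\<And>k. degree (G k) \<le> M" and K: "compact K"
  shows "uniform_limit K (\<lambda>k. poly (G k)) (poly p) sequentially"
proof (rule uniform_limitI)
  fix \<epsilon> :: real assume "0 < \<epsilon>"
  have dp: "degree p \<le> M"
    by (rule degree_le_of_coeffwise_limit[OF lim deg])
  obtain B where B: "\<And>z. z \<in> K \<Longrightarrow> norm z \<le> B"
    using compact_imp_bounded[OF K] unfolding bounded_iff by blast
  define e where "e k = (\<Sum>i\<le>M. norm (coeff (G k) i - coeff p i) * B ^ i)" for k
  have "e \<longlonglongrightarrow> (\<Sum>i\<le>M. 0 * B ^ i)"
    unfolding e_def using lim unfolding coeffwise_limit_def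
    by (intro tendsto_sum tendsto_mult tendsto_const tendsto_norm_zero LIM_zero) auto
  then have "\<forall>\<^sub>F k in sequentially. e k < \<epsilon>"
    using \<open>0 < \<epsilon>\<close> by (simp add: order_tendstoD(2))
  then show "\<forall>\<^sub>F k in sequentially. \<forall>z\<in>K. dist (poly (G k) z) (poly p z) < \<epsilon>"
  proof eventually_elim
    case (elim k)
    show ?case
    proof
      fix z assume "z \<in> K"
      then show "dist (poly (G k) z) (poly p z) < \<epsilon>"
        using le_less_trans[OF norm_poly_diff_le[OF deg dp B[OF \<open>z \<in> K\<close>]]] elim
        by (simp add: dist_norm e_def)
    qed
  qed
qed

lemma poly_limit_nonzero_on_connected:
  assumes U: "open U" "connected U" and lim: "coeffwise_limit G p" and deg: "\<And>k. degree (G k) \<le> M"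
    and nz: "\<And>k z. z \<in> U \<Longrightarrow> poly (G k) z \<noteq> 0" and "p \<noteq> 0" and z0: "z0 \<in> U"
  shows "poly p z0 \<noteq> 0"
proof (cases "poly p constant_on U")
  case True
  show ?thesis
  proof
    assume "poly p z0 = 0"
    then have "U \<subseteq> {z. poly p z = 0}"
      using True z0 by (auto simp: constant_on_def)
    then have "finite U"
      using poly_roots_finite[OF \<open>p \<noteq> 0\<close>] finite_subset by blast
    then show False
      using finite_imp_not_open U(1) z0 by blast
  qed
next
  case False
  show ?thesis
  proof (rule Hurwitz_no_zeros[OF U, where \<F> = "\<lambda>k. poly (G k)" and g = "poly p"])
    show "poly (G k) holomorphic_on U" "poly p holomorphic_on U" for k
      by (rule poly_holomorphic_on[OF holomorphic_on_ident])+
    show "uniform_limit K (\<lambda>k. poly (G k)) (poly p) sequentially" if "compact K" for K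
      by (rule uniform_limit_poly[OF lim deg that])
  qed (use False nz z0 in auto)
qed

lemma stable_on_coeffwise_limit:
  assumes \<Omega>: "open \<Omega>" and lim: "coeffwise_limit G p" and deg: "\<And>k. degree (G k) \<le> M"
    and stable: "\<And>k. stable_on \<Omega> (G k) \<or> G k = 0"
  shows "stable_on \<Omega> p \<or> p = 0"
proof (cases "p = 0")
  case False
  then obtain i where "coeff p i \<noteq> 0"
    by (meson leading_coeff_neq_0)
  then have "\<forall>\<^sub>F k in sequentially. coeff (G k) i \<noteq> 0"
    using lim tendsto_imp_eventually_ne unfolding coeffwise_limit_def by blast
  then obtain N where N: "\<And>k. k \<ge> N \<Longrightarrow> G k \<noteq> 0"
    unfolding eventually_sequentially by force
  have lim': "coeffwise_limit (\<lambda>k. G (k + N)) p"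
    using lim unfolding coeffwise_limit_def by (auto intro: LIMSEQ_ignore_initial_segment)
  have "poly p z \<noteq> 0" if "z \<in> \<Omega>" for z
  proof (rule poly_limit_nonzero_on_connected[OF _ _ lim' deg _ False])
    show "open (connected_component_set \<Omega> z)"
      by (rule open_connected_component[OF \<Omega>])
    show "poly (G (k + N)) w \<noteq> 0" if "w \<in> connected_component_set \<Omega> z" for k w
      using stable[of "k + N"] N[of "k + N"] connected_component_subset that
      by (fastforce simp: stable_on_def)
  qed (use that in simp_all)
  then show ?thesis
    using False by (simp add: stable_on_def)
qed simp

section \<open>Real affine perturbations\<close>

lemma stable_on_halfplanes_real_linear: "stable_on (halfplanes \<Sigma>) [:1, complex_of_real s:]"
proof -
  have "Im w = 0" if "poly [:1, complex_of_real s:] w = 0" for w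
  proof -
    have "s * Im w = 0"
      using arg_cong[OF that, of Im] by auto
    moreover have "s \<noteq> 0"
      using that by auto
    ultimately show ?thesis
      by auto
  qed
  moreover have "Im w \<noteq> 0" if "w \<in> halfplanes \<Sigma>" for w
    using that by (auto simp: halfplanes_def)
  ultimately show ?thesis
    by (auto simp: stable_on_def)
qed

lemma stable_on_halfplanes_pcompose_affine:
  assumes l: "l > 0" and p: "stable_on (halfplanes \<Sigma>) p"
  shows "stable_on (halfplanes \<Sigma>) (pcompose p [:complex_of_real t, complex_of_real l:])"
proof -
  have "poly [:complex_of_real t, complex_of_real l:] w \<in> halfplanes \<Sigma> \<longleftrightarrow> w \<in> halfplanes \<Sigma>" for w
  proof -
    have pos: "0 < l * x \<longleftrightarrow> 0 < x" for x :: real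
      using l by (metis mult_pos_pos zero_less_mult_pos)
    have "0 < \<sigma> * Im (poly [:complex_of_real t, complex_of_real l:] w) \<longleftrightarrow> 0 < \<sigma> * Im w" for \<sigma>
    proof -
      have "\<sigma> * Im (poly [:complex_of_real t, complex_of_real l:] w) = l * (\<sigma> * Im w)"
        by (simp add: algebra_simps)
      then show ?thesis
        by (simp only: pos)
    qed
    then show ?thesis
      by (simp only: halfplanes_def mem_Collect_eq)
  qed
  moreover have "pcompose p [:complex_of_real t, complex_of_real l:] \<noteq> 0"
    using p l by (simp add: stable_on_def pcompose_eq_0_iff)
  ultimately show ?thesis
    using p by (simp add: stable_on_def poly_pcompose)
qed

lemma exists_nonroot_near:
  fixes P :: "complex poly" and x0 \<delta> :: real
  assumes "P \<noteq> 0" "\<delta> > 0"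
  obtains x where "\<bar>x - x0\<bar> < \<delta>" "poly P (of_real x) \<noteq> 0"
proof -
  have "finite (complex_of_real -` {z. poly P z = 0})"
    using poly_roots_finite[OF assms(1)] by (rule finite_vimageI) (simp add: inj_of_real)
  moreover have "\<not> finite {x0 - \<delta><..<x0 + \<delta>}"
    using assms(2) by simp
  ultimately obtain x where "x \<in> {x0 - \<delta><..<x0 + \<delta>}" "x \<notin> complex_of_real -` {z. poly P z = 0}"
    by (meson finite_subset subsetI)
  then show ?thesis
    by (intro that[of x]) (auto simp: abs_less_iff)
qed

lemma coeff_pcompose_translate:
  fixes p :: "complex poly"
  assumes "degree p \<le> n"
  shows "coeff (pcompose p [:t, 1:]) j = poly (\<Sum>i\<le>n. monom (coeff p i * of_nat (i choose j)) (i - j)) t"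
proof -
  have "coeff ([:t, 1:] ^ i) j = of_nat (i choose j) * t ^ (i - j)" for i
  proof (cases "j \<le> i")
    case False
    then have "degree ([:t, 1:] ^ i) < j"
      using degree_linear_power_le[of t 1 i] by simp
    then show ?thesis
      using False by (simp add: coeff_eq_0)
  qed (simp add: coeff_linear_poly_power)
  then show ?thesis
    by (simp add: pcompose_eq_sum_atMost[OF assms] coeff_sum poly_sum poly_monom mult_ac)
qed

lemma exists_translate_coeff_nonzero:
  fixes p :: "complex poly"
  assumes p: "degree p \<le> n" "coeff p n \<noteq> 0" and j: "j \<le> n" and "\<delta> > 0"
  obtains t :: real where "\<bar>t\<bar> < \<delta>" "coeff (pcompose p [:of_real t, 1:]) j \<noteq> 0"
proof -
  define P where "P = (\<Sum>i\<le>n. monom (coeff p i * of_nat (i choose j)) (i - j))"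
  have "coeff P (n - j) = (\<Sum>i\<le>n. if i = n then coeff p n * of_nat (n choose j) else 0)"
    unfolding P_def coeff_sum
  proof (rule sum.cong)
    fix i assume "i \<in> {..n}"
    then show "coeff (monom (coeff p i * of_nat (i choose j)) (i - j)) (n - j)
        = (if i = n then coeff p n * of_nat (n choose j) else 0)"
      using j by (cases "j \<le> i") (auto simp: coeff_monom binomial_eq_0)
  qed simp
  also have "\<dots> = coeff p n * of_nat (n choose j)"
    by simp
  finally have "coeff P (n - j) \<noteq> 0"
    using p(2) j by simp
  then have "P \<noteq> 0"
    by auto
  then obtain t where "\<bar>t - 0\<bar> < \<delta>" "poly P (of_real t) \<noteq> 0"
    using exists_nonroot_near[OF _ \<open>\<delta> > 0\<close>] by metis
  then show ?thesis
    using that coeff_pcompose_translate[OF p(1)] by (simp add: P_def)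
qed

lemma functional_pcompose_scale:
  assumes L: "linear_functional_on n L" and q: "degree q \<le> n"
  shows "L (pcompose q [:0, x:]) = poly (\<Sum>i\<le>n. monom (coeff q i * L (monom 1 i)) i) x"
proof -
  have "degree (pcompose q [:0, x:]) \<le> n"
    using degree_pcompose_le[of q "[:0, x:]"] q by (cases "x = 0") auto
  then show ?thesis
    by (simp add: linear_functional_on_expand[OF L] coeff_pcompose_linear poly_sum poly_monom mult_ac)
qed

text \<open>Translations make the \<open>j\<close>-th coefficient non-zero; the functional of the dilates is then a
  polynomial in the dilation factor whose \<open>j\<close>-th coefficient is a non-zero multiple of
  \<open>L (monom 1 j)\<close>.\<close>

lemma functional_monom_eq_0_if_affine_images_vanish:
  assumes L: "linear_functional_on n L" and p: "degree p \<le> n" "coeff p n \<noteq> 0" and "\<delta> > 0"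
    and vanish: "\<And>l t. \<bar>l - 1\<bar> < \<delta> \<Longrightarrow> \<bar>t\<bar> < \<delta> \<Longrightarrow> L (pcompose p [:of_real t, of_real l:]) = 0"
    and j: "j \<le> n"
  shows "L (monom 1 j) = 0"
proof -
  obtain t where t: "\<bar>t\<bar> < \<delta>" "coeff (pcompose p [:of_real t, 1:]) j \<noteq> 0"
    using exists_translate_coeff_nonzero[OF p j \<open>\<delta> > 0\<close>] by blast
  define q where "q = pcompose p [:of_real t, 1:]"
  define P where "P = (\<Sum>i\<le>n. monom (coeff q i * L (monom 1 i)) i)"
  have dq: "degree q \<le> n"
    using p(1) by (simp add: q_def degree_pcompose)
  have "poly P (of_real l) = 0" if "\<bar>l - 1\<bar> < \<delta>" for l
  proof -
    have "poly P (of_real l) = L (pcompose q [:0, of_real l:])"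
      using functional_pcompose_scale[OF L dq] by (simp add: P_def)
    also have "pcompose q [:0, of_real l:] = pcompose p [:of_real t, of_real l:]"
      by (simp add: q_def pcompose_assoc[symmetric] pcompose_pCons)
    finally show ?thesis
      using vanish[OF that t(1)] by simp
  qed
  then have "P = 0"
    using exists_nonroot_near[of P \<delta> 1] \<open>\<delta> > 0\<close> by metis
  moreover have "coeff P j = coeff q j * L (monom 1 j)"
    using j by (simp add: P_def coeff_sum coeff_monom)
  ultimately show ?thesis
    using t(2) by (simp add: q_def)
qed

lemma exists_affine_perturbation:
  assumes L: "linear_functional_on n L" "degree h \<le> n" "L h \<noteq> 0"
    and p: "degree p \<le> n" "coeff p n \<noteq> 0" and "\<delta> > 0"
  obtains l t :: real
  where "\<bar>l - 1\<bar> < \<delta>" "\<bar>t\<bar> < \<delta>" "L (pcompose p [:of_real t, of_real l:]) \<noteq> 0"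
proof -
  have False if "\<And>l t. \<bar>l - 1\<bar> < \<delta> \<Longrightarrow> \<bar>t\<bar> < \<delta> \<Longrightarrow> L (pcompose p [:of_real t, of_real l:]) = 0"
  proof -
    have "L h = 0"
      using functional_monom_eq_0_if_affine_images_vanish[OF L(1) p \<open>\<delta> > 0\<close> that]
      by (simp add: linear_functional_on_expand[OF L(1,2)])
    then show False
      using L(3) by simp
  qed
  then show ?thesis
    using that by blast
qed

lemma LIMSEQ_of_abs_diff_less:
  fixes x \<delta> :: "nat \<Rightarrow> real"
  assumes "\<And>k. \<bar>x k - a\<bar> < \<delta> k" "\<delta> \<longlonglongrightarrow> 0"
  shows "x \<longlonglongrightarrow> a"
proof -
  have "(\<lambda>k. x k - a) \<longlonglongrightarrow> 0"
    by (rule Lim_null_comparison[OF _ assms(2)]) (use assms(1) in \<open>auto intro: always_eventually less_imp_le\<close>)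
  then show ?thesis
    by (rule LIM_zero_cancel)
qed

lemma exact_degree_approximation:
  assumes g: "degree g \<le> n" "stable_on (halfplanes \<Sigma>) g"
  obtains P where "coeffwise_limit P g" "\<And>k. degree (P k) = n" "\<And>k. stable_on (halfplanes \<Sigma>) (P k)"
proof -
  define \<delta> :: "nat \<Rightarrow> real" where "\<delta> k = inverse (real (Suc k))" for k
  define P where "P k = g * [:1, of_real (\<delta> k):] ^ (n - degree g)" for k
  have "g \<noteq> 0"
    using g(2) by (simp add: stable_on_def)
  moreover have "\<delta> k \<noteq> 0" for k
    by (simp add: \<delta>_def)
  ultimately have "degree (P k) = n" for k
    using g(1) by (auto simp: P_def degree_mult_eq degree_power_eq)
  moreover have "stable_on (halfplanes \<Sigma>) (P k)" for k
    unfolding P_def by (intro stable_on_mult g(2) stable_on_power stable_on_halfplanes_real_linear)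
  moreover have "coeffwise_limit P (g * [:1, 0:] ^ (n - degree g))"
    unfolding P_def \<delta>_def
    by (intro coeffwise_limit_mult coeffwise_limit_const coeffwise_limit_power coeffwise_limit_pCons
        tendsto_of_real[where 'a = complex, of _ 0, simplified] LIMSEQ_inverse_real_of_nat tendsto_const)
  then have "coeffwise_limit P g"
    by (simp flip: one_pCons)
  ultimately show ?thesis
    using that by blast
qed

lemma halfplanes_stable_approximation:
  assumes L: "linear_functional_on n L" "degree h \<le> n" "L h \<noteq> 0"
    and g: "degree g \<le> n" "stable_on (halfplanes \<Sigma>) g"
  obtains G where "coeffwise_limit G g" "\<And>k. degree (G k) \<le> n" "\<And>k. L (G k) \<noteq> 0"
    "\<And>k. stable_on (halfplanes \<Sigma>) (G k)"
proof -
  obtain P where P: "coeffwise_limit P g" "\<And>k. degree (P k) = n" "\<And>k. stable_on (halfplanes \<Sigma>) (P k)"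
    using exact_degree_approximation[OF g] by blast
  have coeffP: "coeff (P k) n \<noteq> 0" for k
    using P(2,3) by (metis leading_coeff_0_iff stable_on_def)
  define \<delta> :: "nat \<Rightarrow> real" where "\<delta> k = inverse (real (Suc k))" for k
  have \<delta>: "\<delta> k > 0" "\<delta> k \<le> 1" for k
    by (simp_all add: \<delta>_def field_simps)
  have "\<exists>l t. \<bar>l - 1\<bar> < \<delta> k \<and> \<bar>t\<bar> < \<delta> k \<and> L (pcompose (P k) [:of_real t, of_real l:]) \<noteq> 0" for k
    using exists_affine_perturbation[OF L _ coeffP \<delta>(1)] P(2) by (metis order_refl)
  then obtain l t where lt: "\<And>k. \<bar>l k - 1\<bar> < \<delta> k" "\<And>k. \<bar>t k\<bar> < \<delta> k"
    "\<And>k. L (pcompose (P k) [:of_real (t k), of_real (l k):]) \<noteq> 0"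
    by metis
  define G where "G k = pcompose (P k) [:of_real (t k), of_real (l k):]" for k
  have "\<delta> \<longlonglongrightarrow> 0"
    unfolding \<delta>_def by (rule LIMSEQ_inverse_real_of_nat)
  then have "l \<longlonglongrightarrow> 1" "t \<longlonglongrightarrow> 0"
    using LIMSEQ_of_abs_diff_less[of l 1] LIMSEQ_of_abs_diff_less[of t 0] lt(1,2) by auto
  then have "coeffwise_limit (\<lambda>k. [:of_real (t k), of_real (l k):]) [:0, 1:]"
    by (intro coeffwise_limit_pCons coeffwise_limit_const tendsto_of_real[where 'a = complex, of _ 0, simplified]
        tendsto_of_real[where 'a = complex, of _ 1, simplified])
  then have "coeffwise_limit G (pcompose g [:0, 1:])"
    unfolding G_def using P(1,2) by (intro coeffwise_limit_pcompose) auto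
  moreover have "degree (G k) \<le> n" for k
    using P(2)[of k] by (simp add: G_def degree_pcompose)
  moreover have "stable_on (halfplanes \<Sigma>) (G k)" for k
    using lt(1)[of k] \<delta>(2)[of k] unfolding G_def
    by (intro stable_on_halfplanes_pcompose_affine P(3)) auto
  ultimately show ?thesis
    using that lt(3) by (simp add: G_def)
qed

definition preserves_stability :: "complex poly set \<Rightarrow> complex set \<Rightarrow> (complex poly \<Rightarrow> complex poly) \<Rightarrow> bool"
  where "preserves_stability A \<Omega> S \<longleftrightarrow> (\<forall>f\<in>A. stable_on \<Omega> f \<longrightarrow> stable_on \<Omega> (S f) \<or> S f = 0)"

lemma preserves_stability_iff:
  "preserves_stability {f. P f} \<Omega> S \<longleftrightarrow> (\<forall>f. P f \<and> stable_on \<Omega> f \<longrightarrow> stable_on \<Omega> (S f) \<or> S f = 0)"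
  by (auto simp: preserves_stability_def)

lemma preserves_stability_Compl_iff:
  "preserves_stability {f. P f} (- X) S \<longleftrightarrow> (\<forall>f. P f \<and> f \<in> zeros_in X \<longrightarrow> S f \<in> zeros_in X \<union> {0})"
  by (auto simp: preserves_stability_def stable_on_iff_zeros_in_Compl)

lemma preserves_stability_subset: "preserves_stability B \<Omega> S \<Longrightarrow> A \<subseteq> B \<Longrightarrow> preserves_stability A \<Omega> S"
  by (auto simp: preserves_stability_def)

lemma preserves_stability_cong:
  assumes "\<And>f. f \<noteq> 0 \<Longrightarrow> f \<in> A \<longleftrightarrow> f \<in> B"
  shows "preserves_stability A \<Omega> S \<longleftrightarrow> preserves_stability B \<Omega> S"
  using assms by (auto simp: preserves_stability_def stable_on_def)

lemma preserves_stability_closure: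
  assumes S: "linear_map_on n S" "\<And>f. degree f \<le> n \<Longrightarrow> degree (S f) \<le> m"
    and L: "linear_functional_on n L" "degree h \<le> n" "L h \<noteq> 0"
    and pres: "preserves_stability {f. degree f \<le> n \<and> L f \<noteq> 0} (halfplanes \<Sigma>) S"
  shows "preserves_stability {f. degree f \<le> n} (halfplanes \<Sigma>) S"
  unfolding preserves_stability_def
proof (intro ballI impI)
  fix g assume "g \<in> {f. degree f \<le> n}" and g: "stable_on (halfplanes \<Sigma>) g"
  then obtain G where G: "coeffwise_limit G g" "\<And>k. degree (G k) \<le> n" "\<And>k. L (G k) \<noteq> 0"
    "\<And>k. stable_on (halfplanes \<Sigma>) (G k)"
    using halfplanes_stable_approximation[OF L] by blast
  show "stable_on (halfplanes \<Sigma>) (S g) \<or> S g = 0"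
  proof (rule stable_on_coeffwise_limit[OF open_halfplanes])
    show "coeffwise_limit (\<lambda>k. S (G k)) (S g)"
      by (rule coeffwise_limit_linear[OF S(1) G(1,2)])
    show "degree (S (G k)) \<le> m" for k
      by (rule S(2)[OF G(2)])
    show "stable_on (halfplanes \<Sigma>) (S (G k)) \<or> S (G k) = 0" for k
      using pres G(2,3,4) by (auto simp: preserves_stability_def)
  qed
qed

lemma preserves_stability_degree_eq_iff_le:
  assumes S: "linear_map_on n S" "\<And>f. degree f \<le> n \<Longrightarrow> degree (S f) \<le> m"
  shows "preserves_stability {f. degree f = n} (halfplanes \<Sigma>) S
    \<longleftrightarrow> preserves_stability {f. degree f \<le> n} (halfplanes \<Sigma>) S"
proof
  assume "preserves_stability {f. degree f = n} (halfplanes \<Sigma>) S"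
  then have "preserves_stability {f. degree f \<le> n \<and> coeff f n \<noteq> 0} (halfplanes \<Sigma>) S"
    by (rule preserves_stability_subset) (auto intro: le_antisym le_degree)
  then show "preserves_stability {f. degree f \<le> n} (halfplanes \<Sigma>) S"
    using preserves_stability_closure[OF S linear_functional_on_coeff[OF linear_map_on_id],
        where h = "monom 1 n"]
    by (simp add: degree_monom_le)
qed (auto elim: preserves_stability_subset)

lemma preserves_stability_nonvanishing_at_iff:
  assumes S: "linear_map_on n S" "\<And>f. degree f \<le> n \<Longrightarrow> degree (S f) \<le> m"
  shows "preserves_stability {f. degree f \<le> n \<and> poly f \<alpha> \<noteq> 0} (halfplanes \<Sigma>) S
    \<longleftrightarrow> preserves_stability {f. degree f \<le> n} (halfplanes \<Sigma>) S"
proof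
  assume "preserves_stability {f. degree f \<le> n \<and> poly f \<alpha> \<noteq> 0} (halfplanes \<Sigma>) S"
  then show "preserves_stability {f. degree f \<le> n} (halfplanes \<Sigma>) S"
    using preserves_stability_closure[OF S linear_functional_on_poly[OF linear_map_on_id], where h = 1]
    by simp
qed (auto elim: preserves_stability_subset)

section \<open>The conjugated operator\<close>

locale mobius_conjugation =
  fixes T :: "complex poly \<Rightarrow> complex poly" and n m :: nat and a b c d :: complex
  assumes T_linear: "linear_map_on n T"
    and degree_T: "\<And>f. degree f \<le> n \<Longrightarrow> degree (T f) \<le> m"
    and degree_T_attained: "\<exists>f. degree f \<le> n \<and> degree (T f) = m"
    and det: "a * d - b * c \<noteq> 0"
begin

definition S :: "complex poly \<Rightarrow> complex poly" where
  "S f = phi_inv m a b c d (T (phi n a b c d f))"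

lemma
  assumes "degree f \<le> n"
  shows degree_S: "degree (S f) \<le> m"
    and phi_S: "phi m a b c d (S f) = T (phi n a b c d f)"
  using degree_phi_inv[OF det] phi_phi_inv[OF det] degree_T[OF degree_phi] by (simp_all add: S_def)

lemma S_linear: "linear_map_on n S"
  unfolding linear_map_on_def
proof (intro conjI allI impI)
  fix f g :: "complex poly" assume f: "degree f \<le> n" and g: "degree g \<le> n"
  have fg: "degree (f + g) \<le> n"
    using f g by (simp add: degree_add_le)
  show "S (f + g) = S f + S g"
  proof (rule inj_onD[OF phi_inj_on[OF det]])
    show "phi m a b c d (S (f + g)) = phi m a b c d (S f + S g)"
      using T_linear f g fg by (simp add: phi_S phi_add linear_map_on_def degree_phi)
    show "S (f + g) \<in> {p. degree p \<le> m}" "S f + S g \<in> {p. degree p \<le> m}"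
      using degree_S f g fg by (auto intro: degree_add_le)
  qed
next
  fix f :: "complex poly" and s assume f: "degree f \<le> n"
  have fs: "degree (smult s f) \<le> n"
    using f by (rule order_trans[OF degree_smult_le])
  show "S (smult s f) = smult s (S f)"
  proof (rule inj_onD[OF phi_inj_on[OF det]])
    show "phi m a b c d (S (smult s f)) = phi m a b c d (smult s (S f))"
      using T_linear f fs by (simp add: phi_S phi_smult linear_map_on_def degree_phi)
    show "S (smult s f) \<in> {p. degree p \<le> m}" "smult s (S f) \<in> {p. degree p \<le> m}"
      using degree_S f fs by (auto intro: order_trans[OF degree_smult_le])
  qed
qed

lemma exists_S_nonzero_at_infinity_image:
  assumes c: "c \<noteq> 0" and g: "degree g \<le> n" "S g \<noteq> 0"
  shows "\<exists>h. degree h \<le> n \<and> poly (S h) (a / c) \<noteq> 0"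
proof -
  obtain h where h: "degree h \<le> n" "T (phi n a b c d h) \<noteq> 0" "degree (T (phi n a b c d h)) = m"
  proof (cases "m = 0")
    case True
    have "T (phi n a b c d g) \<noteq> 0"
      using g phi_S[OF g(1)] phi_eq_0_iff[OF det degree_S[OF g(1)]] by simp
    then show ?thesis
      using that g(1) degree_T[OF degree_phi] True by auto
  next
    case False
    obtain f where f: "degree f \<le> n" "degree (T f) = m"
      using degree_T_attained by blast
    then have "T f \<noteq> 0"
      using False by auto
    then show ?thesis
      using that[of "phi_inv n a b c d f"] f phi_phi_inv[OF det f(1)] degree_phi_inv[OF det f(1)] by simp
  qed
  have "coeff (T (phi n a b c d h)) m \<noteq> 0"
    using h(2,3) by (metis leading_coeff_0_iff)
  then have "coeff (phi m a b c d (S h)) m \<noteq> 0"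
    using h(1) by (simp add: phi_S)
  then show ?thesis
    using coeff_phi_top_eq_poly[OF c degree_S[OF h(1)]] h(1) by auto
qed

lemma preserves_stability_mobius_preimage_reduce:
  "preserves_stability {f. degree f = n} (mobius_preimage a b c d \<Omega>) T
    \<longleftrightarrow> preserves_stability {g. degree g \<le> n \<and> coeff (phi n a b c d g) n \<noteq> 0} (\<Omega> - {w. c * w = a}) S"
proof -
  let ?P = "mobius_preimage a b c d \<Omega>" and ?E = "{w. c * w = a}"
  have source: "degree (phi n a b c d g) = n \<and> stable_on ?P (phi n a b c d g)
      \<longleftrightarrow> coeff (phi n a b c d g) n \<noteq> 0 \<and> stable_on (\<Omega> - ?E) g" if "degree g \<le> n" for g
    using degree_eq_iff_coeff_nonzero[OF degree_phi, of n a b c d g]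
      stable_on_mobius_preimage_phi_iff[OF det that]
    by (auto simp: stable_on_def)
  have target: "stable_on ?P (T (phi n a b c d g)) \<or> T (phi n a b c d g) = 0
      \<longleftrightarrow> stable_on (\<Omega> - ?E) (S g) \<or> S g = 0" if "degree g \<le> n" for g
    using stable_on_mobius_preimage_phi_iff[OF det degree_S[OF that]]
      phi_eq_0_iff[OF det degree_S[OF that]]
    by (auto simp flip: phi_S[OF that])
  have "preserves_stability {f. degree f = n} ?P T
      \<longleftrightarrow> (\<forall>f. degree f \<le> n \<longrightarrow> (degree f = n \<and> stable_on ?P f \<longrightarrow> stable_on ?P (T f) \<or> T f = 0))"
    by (auto simp: preserves_stability_def)
  also have "\<dots> \<longleftrightarrow> (\<forall>g. degree g \<le> n \<longrightarrow> (degree (phi n a b c d g) = n \<and> stable_on ?P (phi n a b c d g)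
      \<longrightarrow> stable_on ?P (T (phi n a b c d g)) \<or> T (phi n a b c d g) = 0))"
    by (rule all_degree_le_phi_iff[OF det])
  also have "\<dots> \<longleftrightarrow> preserves_stability {g. degree g \<le> n \<and> coeff (phi n a b c d g) n \<noteq> 0} (\<Omega> - ?E) S"
    unfolding preserves_stability_def Ball_def mem_Collect_eq using source target by blast
  finally show ?thesis .
qed

lemma preserves_stability_affine_reduce:
  assumes c: "c = 0"
  shows "preserves_stability {g. degree g \<le> n \<and> coeff (phi n a b c d g) n \<noteq> 0} (\<Omega> - {w. c * w = a}) S
    \<longleftrightarrow> preserves_stability {f. degree f = n} \<Omega> S"
proof -
  have "a \<noteq> 0"
    using det c by auto
  then have E: "{w. c * w = a} = {}"
    using c by auto
  show ?thesis
    unfolding E Diff_empty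
  proof (intro preserves_stability_cong)
    fix f :: "complex poly" assume "f \<noteq> 0"
    then show "f \<in> {g. degree g \<le> n \<and> coeff (phi n a b c d g) n \<noteq> 0} \<longleftrightarrow> f \<in> {f. degree f = n}"
      using degree_eq_iff_coeff_nonzero[of f n] \<open>a \<noteq> 0\<close> c by (auto simp: coeff_phi_top_affine)
  qed
qed

lemma preserves_stability_nonaffine_reduce:
  assumes c: "c \<noteq> 0"
  shows "preserves_stability {g. degree g \<le> n \<and> coeff (phi n a b c d g) n \<noteq> 0} (\<Omega> - {w. c * w = a}) S
    \<longleftrightarrow> preserves_stability {g. degree g \<le> n \<and> poly g (a / c) \<noteq> 0} (\<Omega> - {a / c}) S"
proof -
  have "{w. c * w = a} = {a / c}"
    using c by (auto simp: field_simps)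
  moreover have "{g. degree g \<le> n \<and> coeff (phi n a b c d g) n \<noteq> 0} = {g. degree g \<le> n \<and> poly g (a / c) \<noteq> 0}"
    using coeff_phi_top_eq_poly[OF c] c by auto
  ultimately show ?thesis
    by simp
qed

lemma preserves_stability_off_infinity_image_iff:
  assumes c: "c \<noteq> 0" and inside: "a / c \<in> halfplanes \<Sigma>"
  shows "preserves_stability {g. degree g \<le> n \<and> poly g (a / c) \<noteq> 0} (halfplanes \<Sigma> - {a / c}) S
    \<longleftrightarrow> preserves_stability {f. degree f \<le> n} (halfplanes \<Sigma>) S"
proof -
  have stable_iff: "poly g (a / c) \<noteq> 0 \<and> stable_on (halfplanes \<Sigma> - {a / c}) g \<longleftrightarrow> stable_on (halfplanes \<Sigma>) g" for g
    using inside by (auto simp: stable_on_def)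
  show ?thesis
  proof
    assume A: "preserves_stability {g. degree g \<le> n \<and> poly g (a / c) \<noteq> 0} (halfplanes \<Sigma> - {a / c}) S"
    show "preserves_stability {f. degree f \<le> n} (halfplanes \<Sigma>) S"
      unfolding preserves_stability_def
    proof (intro ballI impI)
      fix f assume f: "f \<in> {f. degree f \<le> n}" "stable_on (halfplanes \<Sigma>) f"
      show "stable_on (halfplanes \<Sigma>) (S f) \<or> S f = 0"
      proof (cases "S f = 0")
        case False
        then obtain h where h: "degree h \<le> n" "poly (S h) (a / c) \<noteq> 0"
          using exists_S_nonzero_at_infinity_image[OF c] f(1) by auto
        have "preserves_stability {g. degree g \<le> n \<and> poly (S g) (a / c) \<noteq> 0} (halfplanes \<Sigma>) S"
          unfolding preserves_stability_def
        proof (intro ballI impI)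
          fix g assume g: "g \<in> {g. degree g \<le> n \<and> poly (S g) (a / c) \<noteq> 0}" "stable_on (halfplanes \<Sigma>) g"
          then have "stable_on (halfplanes \<Sigma> - {a / c}) (S g) \<or> S g = 0"
            using A stable_iff[of g] by (auto simp: preserves_stability_def)
          then show "stable_on (halfplanes \<Sigma>) (S g) \<or> S g = 0"
            using stable_iff[of "S g"] g(1) by auto
        qed
        then have "preserves_stability {f. degree f \<le> n} (halfplanes \<Sigma>) S"
          using preserves_stability_closure[OF S_linear degree_S linear_functional_on_poly[OF S_linear] h]
          by simp
        then show ?thesis
          using f by (auto simp: preserves_stability_def)
      qed simp
    qed
  next
    assume B: "preserves_stability {f. degree f \<le> n} (halfplanes \<Sigma>) S"
    show "preserves_stability {g. degree g \<le> n \<and> poly g (a / c) \<noteq> 0} (halfplanes \<Sigma> - {a / c}) S"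
      unfolding preserves_stability_def
    proof (intro ballI impI)
      fix g assume g: "g \<in> {g. degree g \<le> n \<and> poly g (a / c) \<noteq> 0}" "stable_on (halfplanes \<Sigma> - {a / c}) g"
      then have "stable_on (halfplanes \<Sigma>) (S g) \<or> S g = 0"
        using B stable_iff[of g] by (auto simp: preserves_stability_def)
      then show "stable_on (halfplanes \<Sigma> - {a / c}) (S g) \<or> S g = 0"
        by (auto intro: stable_on_subset)
    qed
  qed
qed

lemma preserves_stability_mobius_preimage_iff:
  "preserves_stability {f. degree f = n} (mobius_preimage a b c d (halfplanes \<Sigma>)) T
    \<longleftrightarrow> preserves_stability {f. degree f \<le> n} (halfplanes \<Sigma>) S"
  unfolding preserves_stability_mobius_preimage_reduce
proof (cases "c = 0")
  case True
  show "preserves_stability {g. degree g \<le> n \<and> coeff (phi n a b c d g) n \<noteq> 0}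
      (halfplanes \<Sigma> - {w. c * w = a}) S \<longleftrightarrow> preserves_stability {f. degree f \<le> n} (halfplanes \<Sigma>) S"
    unfolding preserves_stability_affine_reduce[OF True]
    by (rule preserves_stability_degree_eq_iff_le[OF S_linear degree_S])
next
  case False
  then have c: "c \<noteq> 0" .
  show "preserves_stability {g. degree g \<le> n \<and> coeff (phi n a b c d g) n \<noteq> 0}
      (halfplanes \<Sigma> - {w. c * w = a}) S \<longleftrightarrow> preserves_stability {f. degree f \<le> n} (halfplanes \<Sigma>) S"
    unfolding preserves_stability_nonaffine_reduce[OF c]
  proof (cases "a / c \<in> halfplanes \<Sigma>")
    case False
    then have "halfplanes \<Sigma> - {a / c} = halfplanes \<Sigma>"
      by auto
    then show "preserves_stability {g. degree g \<le> n \<and> poly g (a / c) \<noteq> 0} (halfplanes \<Sigma> - {a / c}) S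
        \<longleftrightarrow> preserves_stability {f. degree f \<le> n} (halfplanes \<Sigma>) S"
      using preserves_stability_nonvanishing_at_iff[OF S_linear degree_S] by simp
  qed (rule preserves_stability_off_infinity_image_iff[OF c])
qed

lemma preserves_stability_circ_dom_iff:
  "preserves_stability {f. degree f = n} (circ_dom a b c d) T
    \<longleftrightarrow> preserves_stability {f. degree f \<le> n} upper_half_plane S"
  unfolding circ_dom_eq_mobius_preimage upper_half_plane_eq_halfplanes
  by (rule preserves_stability_mobius_preimage_iff)

lemma preserves_stability_Compl_frontier_iff:
  "preserves_stability {f. degree f = n} (- frontier (circ_dom a b c d)) T
    \<longleftrightarrow> preserves_stability {f. degree f \<le> n} (- range complex_of_real) S"
  unfolding Compl_frontier_circ_dom[OF det] Compl_range_of_real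
  by (rule preserves_stability_mobius_preimage_iff)

lemma preserves_stability_upper_half_plane_degree_eq_iff_le:
  "preserves_stability {f. degree f = n} upper_half_plane S
    \<longleftrightarrow> preserves_stability {f. degree f \<le> n} upper_half_plane S"
  unfolding upper_half_plane_eq_halfplanes
  by (rule preserves_stability_degree_eq_iff_le[OF S_linear degree_S])

lemma preserves_stability_Compl_reals_degree_eq_iff_le:
  "preserves_stability {f. degree f = n} (- range complex_of_real) S
    \<longleftrightarrow> preserves_stability {f. degree f \<le> n} (- range complex_of_real) S"
  unfolding Compl_range_of_real
  by (rule preserves_stability_degree_eq_iff_le[OF S_linear degree_S])

end

theorem mainTheorem17:
  fixes T :: "complex poly \<Rightarrow> complex poly" and n m :: nat and a b c d :: complex
  assumes T_add: "\<And>f g. degree f \<le> n \<Longrightarrow> degree g \<le> n \<Longrightarrow> T (f + g) = T f + T g"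
    and T_smult: "\<And>f s. degree f \<le> n \<Longrightarrow> T (smult s f) = smult s (T f)"
    and T_deg: "\<And>f. degree f \<le> n \<Longrightarrow> degree (T f) \<le> m"
    and m_max: "\<exists>f. degree f \<le> n \<and> degree (T f) = m"
    and det: "a * d - b * c \<noteq> 0"
    and hp: "is_open_halfplane (circ_dom a b c d) \<longrightarrow> c = 0"
  defines "C \<equiv> circ_dom a b c d"
    and "S \<equiv> (\<lambda>f. phi_inv m a b c d (T (phi n a b c d f)))"
  shows "((\<forall>f. degree f = n \<and> stable_on C f \<longrightarrow> stable_on C (T f) \<or> T f = 0)
            \<longleftrightarrow> (\<forall>f. degree f = n \<and> stable_on upper_half_plane f
                     \<longrightarrow> stable_on upper_half_plane (S f) \<or> S f = 0))
       \<and> ((\<forall>f. degree f = n \<and> stable_on upper_half_plane f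
                     \<longrightarrow> stable_on upper_half_plane (S f) \<or> S f = 0)
            \<longleftrightarrow> (\<forall>f. degree f \<le> n \<and> stable_on upper_half_plane f
                     \<longrightarrow> stable_on upper_half_plane (S f) \<or> S f = 0))
       \<and> ((\<forall>f. degree f = n \<and> f \<in> zeros_in (frontier C) \<longrightarrow> T f \<in> zeros_in (frontier C) \<union> {0})
            \<longleftrightarrow> (\<forall>f. degree f = n \<and> f \<in> zeros_in (complex_of_real ` UNIV)
                     \<longrightarrow> S f \<in> zeros_in (complex_of_real ` UNIV) \<union> {0}))
       \<and> ((\<forall>f. degree f = n \<and> f \<in> zeros_in (complex_of_real ` UNIV)
                     \<longrightarrow> S f \<in> zeros_in (complex_of_real ` UNIV) \<union> {0})
            \<longleftrightarrow> (\<forall>f. degree f \<le> n \<and> f \<in> zeros_in (complex_of_real ` UNIV)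
                     \<longrightarrow> S f \<in> zeros_in (complex_of_real ` UNIV) \<union> {0}))"
proof -
  interpret M: mobius_conjugation T n m a b c d
  proof
    show "linear_map_on n T"
      using T_add T_smult by (simp add: linear_map_on_def)
  qed (fact T_deg m_max det)+
  have S: "S = M.S"
    by (simp add: S_def M.S_def fun_eq_iff)
  show ?thesis
    unfolding C_def S preserves_stability_iff[symmetric] preserves_stability_Compl_iff[symmetric]
    using M.preserves_stability_circ_dom_iff M.preserves_stability_upper_half_plane_degree_eq_iff_le
      M.preserves_stability_Compl_frontier_iff M.preserves_stability_Compl_reals_degree_eq_iff_le
    by blast
qed

end
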